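(* Let $b_n=\min(\sqrt{n},\sqrt{n/\lambda^*})$ (with $n/0:=\infty$). Then for every $\delta>0$ there exists a real number $M$ such that $$\sup_{n\in\mathbb{N}}\ \sup_{\beta\in\mathbb{R}^p}P_\beta\big(b_n\|\hat\beta_{AL}-\beta\|>M\big)\le\delta.$$
   Context: For each $n\ge p$: linear regression model $y=X\beta+\varepsilon$ with $y\in\mathbb{R}^n$, non-stochastic $X\in\mathbb{R}^{n\times p}$ ($p$ fixed) of full column rank, unknown $\beta\in\mathbb{R}^p$, and $\varepsilon$ with i.i.d. components of mean zero and finite variance $\sigma^2>0$; $P_\beta$ is the probability when the true parameter is $\beta$. $X'X/n\to C$ positive definite as $n\to\infty$. $\hat\beta_{LS}=(X'X)^{-1}X'y$; the events $\{\hat\beta_{LS,j}=0\}$ have probability zero and are excluded. Non-negative tuning parameters $\lambda_j=\lambda_{n,j}$, $\lambda^*=\max_j\lambda_j$. Adaptive Lasso: $\hat\beta_{AL}=\arg\min_{b\in\mathbb{R}^p}\big(\|y-Xb\|^2+2\sum_{j=1}^p\lambda_j|b_j|/|\hat\beta_{LS,j}|\big)$. *)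

theory Defs
  imports "HOL-Analysis.Analysis" "HOL-Probability.Probability"
begin

text \<open>Regression data for sample size n: design rows \<open>X n i :: real^'p\<close> for \<open>i < n\<close>,
  responses \<open>y :: nat \<Rightarrow> real\<close> (only entries \<open>i < n\<close> matter).\<close>

definition XtX :: "(nat \<Rightarrow> nat \<Rightarrow> real^'p) \<Rightarrow> nat \<Rightarrow> real^'p^'p" where
  "XtX X n = (\<chi> j k. \<Sum>i<n. X n i $ j * X n i $ k)"

definition Xty :: "(nat \<Rightarrow> nat \<Rightarrow> real^'p) \<Rightarrow> nat \<Rightarrow> (nat \<Rightarrow> real) \<Rightarrow> real^'p" where
  "Xty X n y = (\<chi> j. \<Sum>i<n. X n i $ j * y i)"

definition betaLS :: "(nat \<Rightarrow> nat \<Rightarrow> real^'p) \<Rightarrow> nat \<Rightarrow> (nat \<Rightarrow> real) \<Rightarrow> real^'p" where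
  "betaLS X n y = matrix_inv (XtX X n) *v Xty X n y"

definition AL_obj :: "(nat \<Rightarrow> nat \<Rightarrow> real^'p) \<Rightarrow> (nat \<Rightarrow> 'p \<Rightarrow> real) \<Rightarrow> nat
    \<Rightarrow> (nat \<Rightarrow> real) \<Rightarrow> real^'p \<Rightarrow> real" where
  "AL_obj X lam n y b =
     (\<Sum>i<n. (y i - X n i \<bullet> b)\<^sup>2)
     + 2 * (\<Sum>j\<in>UNIV. lam n j * \<bar>b $ j\<bar> / \<bar>betaLS X n y $ j\<bar>)"

definition betaAL :: "(nat \<Rightarrow> nat \<Rightarrow> real^'p) \<Rightarrow> (nat \<Rightarrow> 'p \<Rightarrow> real) \<Rightarrow> nat
    \<Rightarrow> (nat \<Rightarrow> real) \<Rightarrow> real^'p" where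
  "betaAL X lam n y = arg_min (AL_obj X lam n y) (\<lambda>_. True)"

definition lamstar :: "(nat \<Rightarrow> 'p::finite \<Rightarrow> real) \<Rightarrow> nat \<Rightarrow> real" where
  "lamstar lam n = Max (range (lam n))"

definition rate_b :: "(nat \<Rightarrow> 'p::finite \<Rightarrow> real) \<Rightarrow> nat \<Rightarrow> real" where
  "rate_b lam n = (if lamstar lam n = 0 then sqrt (real n)
                   else min (sqrt (real n)) (sqrt (real n / lamstar lam n)))"

abbreviation err_space :: "real measure \<Rightarrow> nat \<Rightarrow> (nat \<Rightarrow> real) measure" where
  "err_space D n \<equiv> PiM {..<n} (\<lambda>_. D)"

definition resp :: "(nat \<Rightarrow> nat \<Rightarrow> real^'p) \<Rightarrow> nat \<Rightarrow> real^'p \<Rightarrow> (nat \<Rightarrow> real) \<Rightarrow> (nat \<Rightarrow> real)" where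
  "resp X n \<beta> \<epsilon> = (\<lambda>i. X n i \<bullet> \<beta> + \<epsilon> i)"

end

theory Submission
  imports Defs
begin

text \<open>
  Since \<open>X'X \<ge> c n I\<close> uniformly in \<open>n \<ge> p\<close> (positive definiteness of \<open>C\<close> for large \<open>n\<close>, full rank
  for the finitely many others), the least squares error satisfies
  \<open>\<parallel>\<beta>\<^sub>L\<^sub>S - \<beta>\<parallel> \<le> \<parallel>X'\<epsilon>\<parallel> / (c n)\<close>, and \<open>E \<parallel>X'\<epsilon>\<parallel>\<^sup>2 = \<sigma>\<^sup>2 tr(X'X) = O(n)\<close>; by Markov's inequality
  \<open>\<surd>n \<parallel>\<beta>\<^sub>L\<^sub>S - \<beta>\<parallel>\<close> is bounded in probability, uniformly in \<open>\<beta>\<close>. Comparing the adaptive Lasso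
  objective at its minimiser with its value at \<open>\<beta>\<^sub>L\<^sub>S\<close> gives
  \<open>(\<beta>\<^sub>A\<^sub>L - \<beta>\<^sub>L\<^sub>S)' X'X (\<beta>\<^sub>A\<^sub>L - \<beta>\<^sub>L\<^sub>S) \<le> 2 \<Sum>\<^sub>j \<lambda>\<^sub>j \<le> 2 p \<lambda>*\<close>, hence the deterministic bound
  \<open>b\<^sub>n \<parallel>\<beta>\<^sub>A\<^sub>L - \<beta>\<^sub>L\<^sub>S\<parallel> \<le> \<surd>(2p/c)\<close>.
\<close>

lemma matrix_inv_right:
  fixes A :: "'a::semiring_1^'n^'n"
  assumes "invertible A"
  shows "A ** matrix_inv A = mat 1"
  using assms unfolding invertible_def matrix_inv_def
  by (rule someI_ex[where P = "\<lambda>A'. A ** A' = mat 1 \<and> A' ** A = mat 1", THEN conjunct1])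

lemma pos_def_quadratic_lower_bound:
  fixes A :: "real^'n^'n"
  assumes "\<And>x. x \<noteq> 0 \<Longrightarrow> 0 < x \<bullet> (A *v x)"
  shows "\<exists>m>0. \<forall>u. m * (norm u)\<^sup>2 \<le> u \<bullet> (A *v u)"
proof -
  have "sphere (0::real^'n) 1 \<noteq> {}"
    by (metis empty_iff mem_sphere_0 norm_axis_1)
  moreover have "continuous_on (sphere 0 1) (\<lambda>u. u \<bullet> (A *v u))"
    by (intro continuous_intros)
  ultimately obtain x where x: "x \<in> sphere 0 1"
    and x_min: "\<And>u. u \<in> sphere 0 1 \<Longrightarrow> x \<bullet> (A *v x) \<le> u \<bullet> (A *v u)"
    using continuous_attains_inf[OF compact_sphere] by blast
  have "\<forall>u. x \<bullet> (A *v x) * (norm u)\<^sup>2 \<le> u \<bullet> (A *v u)"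
  proof
    fix u :: "real^'n"
    show "x \<bullet> (A *v x) * (norm u)\<^sup>2 \<le> u \<bullet> (A *v u)"
    proof (cases "u = 0")
      case False
      then have "x \<bullet> (A *v x) \<le> (u /\<^sub>R norm u) \<bullet> (A *v (u /\<^sub>R norm u))"
        by (intro x_min) simp
      also have "\<dots> = (u \<bullet> (A *v u)) / (norm u)\<^sup>2"
        using False by (simp add: matrix_vector_mult_scaleR field_simps power2_eq_square)
      finally show ?thesis
        using False by (simp add: pos_le_divide_eq)
    qed simp
  qed
  moreover have "0 < x \<bullet> (A *v x)"
    using x by (intro assms) auto
  ultimately show ?thesis by blast
qed

lemma abs_quadratic_form_le:
  fixes A :: "real^'n^'m" and u :: "real^'m" and w :: "real^'n"
  shows "\<bar>u \<bullet> (A *v w)\<bar> \<le> (\<Sum>i\<in>UNIV. \<Sum>j\<in>UNIV. \<bar>A $ i $ j\<bar>) * norm u * norm w"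
proof -
  have "\<bar>u \<bullet> (A *v w)\<bar> \<le> norm u * norm (A *v w)"
    by (rule Cauchy_Schwarz_ineq2)
  also have "norm (A *v w) \<le> onorm ((*v) A) * norm w"
    by (rule onorm[OF matrix_vector_mul_bounded_linear])
  also have "onorm ((*v) A) \<le> (\<Sum>i\<in>UNIV. \<Sum>j\<in>UNIV. \<bar>A $ i $ j\<bar>)"
    by (rule onorm_le_matrix_component_sum)
  finally show ?thesis
    by (simp add: mult_ac mult_left_mono mult_right_mono)
qed

lemma continuous_coercive_attains_min:
  fixes f :: "'a::heine_borel \<Rightarrow> real"
  assumes "continuous_on UNIV f" "0 \<le> R" and coercive: "\<And>b. R < dist b a \<Longrightarrow> f a \<le> f b"
  shows "\<exists>b. \<forall>x. f b \<le> f x"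
proof -
  obtain b where b: "b \<in> cball a R" "\<And>x. x \<in> cball a R \<Longrightarrow> f b \<le> f x"
    using continuous_attains_inf[OF compact_cball _ continuous_on_subset[OF assms(1)], of a R] assms(2)
    by fastforce
  have "f b \<le> f x" for x
  proof (cases "x \<in> cball a R")
    case False
    then have "f a \<le> f x"
      by (intro coercive) (simp add: dist_commute)
    moreover have "f b \<le> f a"
      using b(2) assms(2) by simp
    ultimately show ?thesis by linarith
  qed (rule b(2))
  then show ?thesis by blast
qed

lemma uniform_positive_constant:
  fixes P :: "nat \<Rightarrow> real \<Rightarrow> bool"
  assumes mono: "\<And>n c c'. 0 < c' \<Longrightarrow> c' \<le> c \<Longrightarrow> P n c \<Longrightarrow> P n c'"
    and each: "\<And>n. n \<ge> a \<Longrightarrow> \<exists>c>0. P n c"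
    and eventually: "c_lim > 0" "eventually (\<lambda>n. P n c_lim) sequentially"
  shows "\<exists>c>0. \<forall>n\<ge>a. P n c"
proof -
  obtain N where N: "\<And>n. n \<ge> N \<Longrightarrow> P n c_lim"
    using eventually(2) by (auto simp: eventually_sequentially)
  obtain c where c: "\<And>n. n \<ge> a \<Longrightarrow> c n > 0 \<and> P n (c n)"
    using each by metis
  define c_min where "c_min = Min (insert c_lim (c ` {a..<N}))"
  have "c_min > 0"
    unfolding c_min_def using eventually(1) c by (auto simp: Min_gr_iff)
  moreover have "P n c_min" if "n \<ge> a" for n
  proof (cases "n \<ge> N")
    case True
    then show ?thesis
      using mono[OF \<open>c_min > 0\<close> _ N] by (simp add: c_min_def)
  next
    case False
    then have "c_min \<le> c n"
      unfolding c_min_def using that by (intro Min.coboundedI) auto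
    then show ?thesis
      using mono[OF \<open>c_min > 0\<close> _ conjunct2[OF c]] that by blast
  qed
  ultimately show ?thesis by blast
qed

lemma real_pos_of_card_le: "CARD('a::finite) \<le> n \<Longrightarrow> 0 < real n"
  using zero_less_card_finite[where 'a = 'a] by linarith

lemma (in product_prob_space) integral_prod_coordinates:
  fixes f :: "'i \<Rightarrow> 'a \<Rightarrow> real"
  assumes "finite I" "J \<subseteq> I" "\<And>j. j \<in> J \<Longrightarrow> integrable (M j) (f j)"
  shows "integrable (PiM I M) (\<lambda>x. \<Prod>j\<in>J. f j (x j))"
    and "(\<integral>x. (\<Prod>j\<in>J. f j (x j)) \<partial>PiM I M) = (\<Prod>j\<in>J. integral\<^sup>L (M j) (f j))"
proof -
  define g where "g j y = (if j \<in> J then f j y else 1)" for j y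
  have g_int: "integrable (M j) (g j)" for j
    by (cases "j \<in> J") (simp_all add: g_def[abs_def] assms(3) M.integrable_const)
  have g_prod: "(\<Prod>j\<in>I. g j (x j)) = (\<Prod>j\<in>J. f j (x j))" for x
    using assms(1,2) by (intro prod.mono_neutral_cong_right) (auto simp: g_def)
  have "integrable (PiM I M) (\<lambda>x. \<Prod>j\<in>I. g j (x j))"
    using assms(1) g_int by (rule product_integrable_prod)
  then show "integrable (PiM I M) (\<lambda>x. \<Prod>j\<in>J. f j (x j))"
    by (simp add: g_prod)
  have "(\<integral>x. (\<Prod>j\<in>I. g j (x j)) \<partial>PiM I M) = (\<Prod>j\<in>I. integral\<^sup>L (M j) (g j))"
    using assms(1) g_int by (rule product_integral_prod)
  also have "\<dots> = (\<Prod>j\<in>J. integral\<^sup>L (M j) (f j))"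
    using assms(1,2) by (intro prod.mono_neutral_cong_right) (auto simp: g_def[abs_def] M.prob_space)
  finally show "(\<integral>x. (\<Prod>j\<in>J. f j (x j)) \<partial>PiM I M) = (\<Prod>j\<in>J. integral\<^sup>L (M j) (f j))"
    by (simp add: g_prod)
qed

lemma integral_PiM_coordinate_mult:
  fixes D :: "real measure" and n :: nat
  assumes D: "prob_space D" "sets D = sets borel" "integrable D (\<lambda>x. x\<^sup>2)" "(\<integral>x. x \<partial>D) = 0"
    and ik: "i < n" "k < n"
  shows "integrable (PiM {..<n} (\<lambda>_. D)) (\<lambda>e. e i * e k)"
    and "(\<integral>e. e i * e k \<partial>PiM {..<n} (\<lambda>_. D)) = (if i = k then \<integral>x. x\<^sup>2 \<partial>D else 0)"
proof -
  interpret product_prob_space "\<lambda>_::nat. D" "{..<n}"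
    by (rule product_prob_spaceI) (rule D(1))
  have "(\<lambda>x. x) \<in> borel_measurable D"
    by (rule measurable_ident_sets[OF D(2)])
  then have int_id: "integrable D (\<lambda>x. x)"
    using D(3) prob_space.finite_measure[OF D(1)] finite_measure.square_integrable_imp_integrable
    by blast
  consider (eq) "i = k" | (neq) "i \<noteq> k"
    by blast
  then have "integrable (PiM {..<n} (\<lambda>_. D)) (\<lambda>e. e i * e k) \<and>
      (\<integral>e. e i * e k \<partial>PiM {..<n} (\<lambda>_. D)) = (if i = k then \<integral>x. x\<^sup>2 \<partial>D else 0)"
  proof cases
    case eq
    have "{i} \<subseteq> {..<n}"
      using ik by auto
    from integral_prod_coordinates[OF finite_lessThan this, of "\<lambda>_ x. x\<^sup>2"] D(3) eq
    show ?thesis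
      by (simp add: power2_eq_square)
  next
    case neq
    have "{i, k} \<subseteq> {..<n}"
      using ik by auto
    from integral_prod_coordinates[OF finite_lessThan this, of "\<lambda>_ x. x"] int_id D(4) neq
    show ?thesis
      by simp
  qed
  then show "integrable (PiM {..<n} (\<lambda>_. D)) (\<lambda>e. e i * e k)"
    and "(\<integral>e. e i * e k \<partial>PiM {..<n} (\<lambda>_. D)) = (if i = k then \<integral>x. x\<^sup>2 \<partial>D else 0)"
    by auto
qed

lemma second_moment_norm_sum_scaleR:
  fixes D :: "real measure" and v :: "nat \<Rightarrow> 'a::real_inner"
  assumes D: "prob_space D" "sets D = sets borel" "integrable D (\<lambda>x. x\<^sup>2)" "(\<integral>x. x \<partial>D) = 0"
  shows "integrable (PiM {..<n} (\<lambda>_. D)) (\<lambda>e. (norm (\<Sum>i<n. e i *\<^sub>R v i))\<^sup>2)"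
    and "(\<integral>e. (norm (\<Sum>i<n. e i *\<^sub>R v i))\<^sup>2 \<partial>PiM {..<n} (\<lambda>_. D))
           = (\<integral>x. x\<^sup>2 \<partial>D) * (\<Sum>i<n. (norm (v i))\<^sup>2)"
proof -
  have expand: "(norm (\<Sum>i<n. e i *\<^sub>R v i))\<^sup>2 = (\<Sum>i<n. \<Sum>k<n. (v i \<bullet> v k) * (e i * e k))" for e :: "nat \<Rightarrow> real"
    unfolding power2_norm_eq_inner inner_sum_left by (simp add: inner_sum_right mult_ac)
  have int: "integrable (PiM {..<n} (\<lambda>_. D)) (\<lambda>e. e i * e k)" if "i < n" "k < n" for i k
    using integral_PiM_coordinate_mult(1)[OF D that] .
  show "integrable (PiM {..<n} (\<lambda>_. D)) (\<lambda>e. (norm (\<Sum>i<n. e i *\<^sub>R v i))\<^sup>2)"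
    unfolding expand by (intro Bochner_Integration.integrable_sum integrable_mult_right int) auto
  have "(\<integral>e. (norm (\<Sum>i<n. e i *\<^sub>R v i))\<^sup>2 \<partial>PiM {..<n} (\<lambda>_. D))
      = (\<Sum>i<n. \<Sum>k<n. (v i \<bullet> v k) * (\<integral>e. e i * e k \<partial>PiM {..<n} (\<lambda>_. D)))"
    unfolding expand
    by (subst Bochner_Integration.integral_sum,
        (intro Bochner_Integration.integrable_sum integrable_mult_right int; simp),
        intro sum.cong refl, subst Bochner_Integration.integral_sum,
        (intro integrable_mult_right int; simp))
       simp
  also have "\<dots> = (\<Sum>i<n. \<Sum>k<n. (v i \<bullet> v k) * (if i = k then \<integral>x. x\<^sup>2 \<partial>D else 0))"
    by (intro sum.cong refl) (simp add: integral_PiM_coordinate_mult(2)[OF D])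
  also have "\<dots> = (\<integral>x. x\<^sup>2 \<partial>D) * (\<Sum>i<n. (norm (v i))\<^sup>2)"
    by (simp add: sum_distrib_left power2_norm_eq_inner if_distrib sum.delta mult.commute cong: if_cong)
  finally show "(\<integral>e. (norm (\<Sum>i<n. e i *\<^sub>R v i))\<^sup>2 \<partial>PiM {..<n} (\<lambda>_. D))
           = (\<integral>x. x\<^sup>2 \<partial>D) * (\<Sum>i<n. (norm (v i))\<^sup>2)" .
qed

lemma XtX_mult_eq_sum: "XtX X n *v b = (\<Sum>i<n. (X n i \<bullet> b) *\<^sub>R X n i)"
  unfolding XtX_def matrix_vector_mult_def inner_vec_def
  by (simp add: vec_eq_iff sum_component sum_distrib_left sum_distrib_right mult_ac sum.swap[of _ "{..<n}"])

lemma Xty_eq_sum: "Xty X n y = (\<Sum>i<n. y i *\<^sub>R X n i)"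
  unfolding Xty_def by (simp add: vec_eq_iff sum_component mult.commute)

lemma inner_XtX_mult: "u \<bullet> (XtX X n *v b) = (\<Sum>i<n. (X n i \<bullet> u) * (X n i \<bullet> b))"
  by (simp add: XtX_mult_eq_sum inner_sum_right inner_commute mult.commute)

lemma Xty_resp: "Xty X n (resp X n \<beta> \<epsilon>) = XtX X n *v \<beta> + Xty X n \<epsilon>"
  by (simp add: Xty_eq_sum XtX_mult_eq_sum resp_def scaleR_add_left sum.distrib)

lemma trace_XtX: "trace (XtX X n) = (\<Sum>i<n. (norm (X n i))\<^sup>2)"
  unfolding trace_def XtX_def power2_norm_eq_inner inner_vec_def
  by (simp add: sum.swap[of _ "{..<n}"])

lemma design_sum_norm_le:
  assumes lim_C: "(\<lambda>n. (1 / real n) *\<^sub>R XtX X n) \<longlonglongrightarrow> C"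
  shows "\<exists>B>0. \<forall>n. (\<Sum>i<n. (norm (X n i))\<^sup>2) \<le> B * real n"
proof -
  have "(\<lambda>n. trace ((1 / real n) *\<^sub>R XtX X n)) \<longlonglongrightarrow> trace C"
    unfolding trace_def by (intro tendsto_intros lim_C)
  then have "Bseq (\<lambda>n. trace ((1 / real n) *\<^sub>R XtX X n))"
    by (rule convergent_imp_Bseq[OF convergentI])
  then obtain B where B: "B > 0" "\<And>n. norm (trace ((1 / real n) *\<^sub>R XtX X n)) \<le> B"
    unfolding Bseq_def by blast
  have "(\<Sum>i<n. (norm (X n i))\<^sup>2) \<le> B * real n" for n
  proof (cases "n = 0")
    case False
    have "trace ((1 / real n) *\<^sub>R XtX X n) = trace (XtX X n) / real n"
      by (simp add: trace_def sum_divide_distrib)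
    then have "trace ((1 / real n) *\<^sub>R XtX X n) = (\<Sum>i<n. (norm (X n i))\<^sup>2) / real n"
      by (simp only: trace_XtX)
    then show ?thesis
      using B(2)[of n] False by (simp add: pos_divide_le_eq)
  qed simp
  with B(1) show ?thesis by blast
qed

lemma prob_norm_Xty_ge:
  fixes D :: "real measure"
  assumes D: "prob_space D" "sets D = sets borel" "integrable D (\<lambda>x. x\<^sup>2)" "(\<integral>x. x \<partial>D) = 0"
    and "a > 0"
  shows "measure (err_space D n) {\<epsilon> \<in> space (err_space D n). a \<le> (norm (Xty X n \<epsilon>))\<^sup>2}
       \<le> (\<integral>x. x\<^sup>2 \<partial>D) * (\<Sum>i<n. (norm (X n i))\<^sup>2) / a"
proof -
  have "measure (err_space D n) {\<epsilon> \<in> space (err_space D n). a \<le> (norm (\<Sum>i<n. \<epsilon> i *\<^sub>R X n i))\<^sup>2}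
      \<le> (\<integral>\<epsilon>. (norm (\<Sum>i<n. \<epsilon> i *\<^sub>R X n i))\<^sup>2 \<partial>err_space D n) / a"
    by (intro integral_Markov_inequality_measure[where A = "space (err_space D n)"]
        second_moment_norm_sum_scaleR(1)[OF D] \<open>a > 0\<close>) auto
  then show ?thesis
    by (simp add: Xty_eq_sum second_moment_norm_sum_scaleR(2)[OF D])
qed

lemma lam_le_lamstar: "lam n j \<le> lamstar lam n"
  unfolding lamstar_def by (rule Max_ge) auto

lemma sum_lam_le_lamstar: "(\<Sum>j\<in>UNIV. lam n j) \<le> real CARD('p) * lamstar lam n"
  for lam :: "nat \<Rightarrow> 'p::finite \<Rightarrow> real"
  using sum_bounded_above[of UNIV "lam n" "lamstar lam n"] lam_le_lamstar by auto

lemma lamstar_nonneg: "(\<And>j. lam n j \<ge> 0) \<Longrightarrow> lamstar lam n \<ge> 0"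
  using lam_le_lamstar[of lam n undefined] by (meson order_trans)

lemma rate_b_nonneg: "(\<And>j. lam n j \<ge> 0) \<Longrightarrow> rate_b lam n \<ge> 0"
  using lamstar_nonneg[of lam n] unfolding rate_b_def by auto

lemma rate_b_le_sqrt: "rate_b lam n \<le> sqrt (real n)"
  unfolding rate_b_def by auto

lemma rate_b_sq_mult_lamstar_le:
  assumes "\<And>j. lam n j \<ge> 0"
  shows "(rate_b lam n)\<^sup>2 * lamstar lam n \<le> real n"
proof (cases "lamstar lam n = 0")
  case False
  then have "lamstar lam n > 0"
    using lamstar_nonneg[where lam = lam, OF assms] by linarith
  moreover have "rate_b lam n \<le> sqrt (real n / lamstar lam n)"
    using False unfolding rate_b_def by simp
  then have "(rate_b lam n)\<^sup>2 \<le> (sqrt (real n / lamstar lam n))\<^sup>2"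
    using rate_b_nonneg[where lam = lam, OF assms] by (rule power_mono)
  with \<open>lamstar lam n > 0\<close> have "(rate_b lam n)\<^sup>2 \<le> real n / lamstar lam n"
    by simp
  ultimately show ?thesis
    by (simp add: pos_le_divide_eq)
qed simp

locale full_rank_design =
  fixes X :: "nat \<Rightarrow> nat \<Rightarrow> real^'p::finite"
  assumes full_rank: "\<And>n b. n \<ge> CARD('p) \<Longrightarrow> (\<forall>i<n. X n i \<bullet> b = 0) \<Longrightarrow> b = 0"
begin

lemma XtX_pos_def:
  assumes "n \<ge> CARD('p)" "u \<noteq> 0"
  shows "0 < u \<bullet> (XtX X n *v u)"
proof -
  obtain i where i: "i < n" "X n i \<bullet> u \<noteq> 0"
    using full_rank[OF assms(1)] assms(2) by blast
  have "0 < (X n i \<bullet> u)\<^sup>2"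
    using i by simp
  also have "\<dots> \<le> (\<Sum>i<n. (X n i \<bullet> u)\<^sup>2)"
    using i by (intro member_le_sum) auto
  finally show ?thesis
    by (simp add: inner_XtX_mult power2_eq_square)
qed

lemma XtX_invertible:
  assumes "n \<ge> CARD('p)"
  shows "invertible (XtX X n)"
proof -
  have "x = 0" if "XtX X n *v x = 0" for x
    using XtX_pos_def[OF assms, of x] that by fastforce
  then show ?thesis
    by (auto simp: invertible_left_inverse matrix_left_invertible_ker)
qed

lemma normal_equations:
  assumes "n \<ge> CARD('p)"
  shows "XtX X n *v betaLS X n y = Xty X n y"
  by (simp add: betaLS_def matrix_vector_mul_assoc matrix_inv_right[OF XtX_invertible[OF assms]])

lemma XtX_betaLS_error:
  assumes "n \<ge> CARD('p)"
  shows "XtX X n *v (betaLS X n (resp X n \<beta> \<epsilon>) - \<beta>) = Xty X n \<epsilon>"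
  by (simp add: matrix_vector_mult_diff_distrib normal_equations[OF assms] Xty_resp)

lemma rss_pythagoras:
  assumes "n \<ge> CARD('p)"
  shows "(\<Sum>i<n. (y i - X n i \<bullet> b)\<^sup>2)
       = (\<Sum>i<n. (y i - X n i \<bullet> betaLS X n y)\<^sup>2) + (b - betaLS X n y) \<bullet> (XtX X n *v (b - betaLS X n y))"
proof -
  define r where "r i = y i - X n i \<bullet> betaLS X n y" for i
  define d where "d = b - betaLS X n y"
  have residual_orthogonal: "(\<Sum>i<n. r i * (X n i \<bullet> d)) = 0"
  proof -
    have "(\<Sum>i<n. r i * (X n i \<bullet> d)) = d \<bullet> (Xty X n y - XtX X n *v betaLS X n y)"
      by (simp add: r_def Xty_eq_sum inner_diff_right inner_sum_right inner_XtX_mult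
          right_diff_distrib sum_subtractf inner_commute mult.commute)
    then show ?thesis
      by (simp add: normal_equations[OF assms])
  qed
  have "(\<Sum>i<n. (y i - X n i \<bullet> b)\<^sup>2) = (\<Sum>i<n. (r i)\<^sup>2 - 2 * (r i * (X n i \<bullet> d)) + (X n i \<bullet> d)\<^sup>2)"
    by (intro sum.cong refl) (simp add: r_def d_def inner_diff_right power2_eq_square algebra_simps)
  also have "\<dots> = (\<Sum>i<n. (r i)\<^sup>2) + d \<bullet> (XtX X n *v d)"
    by (simp add: sum.distrib sum_subtractf sum_distrib_left[symmetric] residual_orthogonal
        inner_XtX_mult power2_eq_square)
  finally show ?thesis
    by (simp add: r_def d_def)
qed

lemma XtX_uniform_lower_bound:
  assumes lim_C: "(\<lambda>n. (1 / real n) *\<^sub>R XtX X n) \<longlonglongrightarrow> C"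
    and C_pd: "\<And>x. x \<noteq> 0 \<Longrightarrow> 0 < x \<bullet> (C *v x)"
  shows "\<exists>c>0. \<forall>n\<ge>CARD('p). \<forall>u. c * real n * (norm u)\<^sup>2 \<le> u \<bullet> (XtX X n *v u)"
proof -
  obtain m where m: "m > 0" "\<And>u. m * (norm u)\<^sup>2 \<le> u \<bullet> (C *v u)"
    using pos_def_quadratic_lower_bound[OF C_pd] by blast
  define E where "E n = (1 / real n) *\<^sub>R XtX X n - C" for n
  have "(\<lambda>n. \<Sum>i\<in>UNIV. \<Sum>j\<in>UNIV. \<bar>E n $ i $ j\<bar>) \<longlonglongrightarrow> (\<Sum>i\<in>UNIV. \<Sum>j\<in>UNIV. \<bar>(C - C) $ i $ j\<bar>)"
    unfolding E_def by (intro tendsto_intros lim_C)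
  then have E_small: "eventually (\<lambda>n. (\<Sum>i\<in>UNIV. \<Sum>j\<in>UNIV. \<bar>E n $ i $ j\<bar>) < m / 2) sequentially"
    using m(1) by (intro order_tendstoD(2)) auto
  show ?thesis
  proof (rule uniform_positive_constant[where c_lim = "m / 2"])
    fix n :: nat and c c' :: real
    assume "0 < c'" "c' \<le> c" "\<forall>u. c * real n * (norm u)\<^sup>2 \<le> u \<bullet> (XtX X n *v u)"
    then show "\<forall>u. c' * real n * (norm u)\<^sup>2 \<le> u \<bullet> (XtX X n *v u)"
      by (meson mult_right_mono of_nat_0_le_iff order_trans zero_le_power2 mult_nonneg_nonneg)
  next
    fix n assume n: "n \<ge> CARD('p)"
    then have "real n > 0"
      by (rule real_pos_of_card_le)
    obtain m' where "m' > 0" "\<And>u. m' * (norm u)\<^sup>2 \<le> u \<bullet> (XtX X n *v u)"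
      using pos_def_quadratic_lower_bound[OF XtX_pos_def[OF n]] by blast
    with \<open>real n > 0\<close> show "\<exists>c>0. \<forall>u. c * real n * (norm u)\<^sup>2 \<le> u \<bullet> (XtX X n *v u)"
      by (intro exI[of _ "m' / real n"]) auto
  next
    show "m / 2 > 0"
      using m(1) by simp
    show "eventually (\<lambda>n. \<forall>u. m / 2 * real n * (norm u)\<^sup>2 \<le> u \<bullet> (XtX X n *v u)) sequentially"
      using E_small eventually_gt_at_top[of 0]
    proof eventually_elim
      case (elim n)
      show ?case
      proof
        fix u :: "real^'p"
        have "m * (norm u)\<^sup>2 - u \<bullet> ((1 / real n) *\<^sub>R XtX X n *v u)
            \<le> u \<bullet> (C *v u) - u \<bullet> ((1 / real n) *\<^sub>R XtX X n *v u)"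
          using m(2)[of u] by simp
        also have "\<dots> = - (u \<bullet> (E n *v u))"
          by (simp add: E_def matrix_vector_mult_diff_rdistrib inner_diff_right)
        also have "\<dots> \<le> (\<Sum>i\<in>UNIV. \<Sum>j\<in>UNIV. \<bar>E n $ i $ j\<bar>) * (norm u)\<^sup>2"
          using abs_quadratic_form_le[of u "E n" u] by (simp add: power2_eq_square mult.assoc)
        also have "\<dots> \<le> m / 2 * (norm u)\<^sup>2"
          using elim(1) by (intro mult_right_mono) auto
        finally have "m / 2 * (norm u)\<^sup>2 \<le> (1 / real n) * (u \<bullet> (XtX X n *v u))"
          by (simp add: scaleR_matrix_vector_assoc[symmetric])
        then show "m / 2 * real n * (norm u)\<^sup>2 \<le> u \<bullet> (XtX X n *v u)"
          using elim(2) by (simp add: field_simps)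
      qed
    qed
  qed
qed

lemma betaLS_error_bound:
  assumes n: "n \<ge> CARD('p)" and lower: "\<And>u. c * real n * (norm u)\<^sup>2 \<le> u \<bullet> (XtX X n *v u)"
  shows "c * real n * norm (betaLS X n (resp X n \<beta> \<epsilon>) - \<beta>) \<le> norm (Xty X n \<epsilon>)"
proof -
  define u where "u = betaLS X n (resp X n \<beta> \<epsilon>) - \<beta>"
  have "(c * real n * norm u) * norm u \<le> u \<bullet> Xty X n \<epsilon>"
    using lower[of u] by (simp add: u_def XtX_betaLS_error[OF n] power2_eq_square mult.assoc)
  also have "\<dots> \<le> norm (Xty X n \<epsilon>) * norm u"
    using norm_cauchy_schwarz[of u "Xty X n \<epsilon>"] by (simp add: mult.commute)
  finally show ?thesis
    by (cases "u = 0") (simp_all add: u_def[symmetric])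
qed

lemma AL_obj_eq:
  assumes "n \<ge> CARD('p)"
  shows "AL_obj X lam n y b
       = (\<Sum>i<n. (y i - X n i \<bullet> betaLS X n y)\<^sup>2)
         + (b - betaLS X n y) \<bullet> (XtX X n *v (b - betaLS X n y))
         + 2 * (\<Sum>j\<in>UNIV. lam n j * \<bar>b $ j\<bar> / \<bar>betaLS X n y $ j\<bar>)"
  unfolding AL_obj_def by (subst rss_pythagoras[OF assms]) (rule refl)

lemma AL_obj_betaLS_le:
  assumes "n \<ge> CARD('p)" "\<And>j. lam n j \<ge> 0"
  shows "AL_obj X lam n y b - AL_obj X lam n y (betaLS X n y)
       \<ge> (b - betaLS X n y) \<bullet> (XtX X n *v (b - betaLS X n y)) - 2 * (\<Sum>j\<in>UNIV. lam n j)"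
proof -
  \<comment> \<open>A vanishing coordinate of \<open>\<beta>\<^sub>L\<^sub>S\<close> contributes \<open>0\<close> here since \<open>x / 0 = 0\<close>.\<close>
  have "(\<Sum>j\<in>UNIV. lam n j * \<bar>betaLS X n y $ j\<bar> / \<bar>betaLS X n y $ j\<bar>) \<le> (\<Sum>j\<in>UNIV. lam n j)"
    using assms(2) by (intro sum_mono) auto
  moreover have "(\<Sum>j\<in>UNIV. lam n j * \<bar>b $ j\<bar> / \<bar>betaLS X n y $ j\<bar>) \<ge> 0"
    using assms(2) by (intro sum_nonneg) auto
  ultimately show ?thesis
    by (simp add: AL_obj_eq[OF assms(1)])
qed

lemma AL_obj_betaAL_le:
  assumes "n \<ge> CARD('p)" "\<And>j. lam n j \<ge> 0"
  shows "AL_obj X lam n y (betaAL X lam n y) \<le> AL_obj X lam n y b"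
proof -
  define f where "f = AL_obj X lam n y"
  define bL where "bL = betaLS X n y"
  define S where "S = (\<Sum>j\<in>UNIV. lam n j)"
  obtain m where m: "m > 0" "\<And>u. m * (norm u)\<^sup>2 \<le> u \<bullet> (XtX X n *v u)"
    using pos_def_quadratic_lower_bound[OF XtX_pos_def[OF assms(1)]] by blast
  have "S \<ge> 0"
    unfolding S_def using assms(2) by (intro sum_nonneg) auto
  have f_eq: "f = (\<lambda>b. (\<Sum>i<n. (y i - X n i \<bullet> b)\<^sup>2) + 2 * (\<Sum>j\<in>UNIV. (lam n j / \<bar>bL $ j\<bar>) * \<bar>b $ j\<bar>))"
    unfolding f_def AL_obj_def bL_def by (simp add: fun_eq_iff)
  have "continuous_on UNIV f"
    unfolding f_eq by (intro continuous_intros)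
  moreover have "f bL \<le> f b" if "sqrt (2 * S / m) < dist b bL" for b
  proof -
    have "(sqrt (2 * S / m))\<^sup>2 < (norm (b - bL))\<^sup>2"
      using that \<open>S \<ge> 0\<close> m(1) by (intro power_strict_mono) (auto simp: dist_norm)
    then have "2 * S / m < (norm (b - bL))\<^sup>2"
      using \<open>S \<ge> 0\<close> m(1) by simp
    then have "2 * S < m * (norm (b - bL))\<^sup>2"
      using m(1) by (simp add: divide_less_eq mult.commute)
    then have "2 * S \<le> (b - bL) \<bullet> (XtX X n *v (b - bL))"
      using m(2)[of "b - bL"] by linarith
    then show ?thesis
      using AL_obj_betaLS_le[where lam = lam and y = y and b = b, OF assms] by (simp add: f_def bL_def S_def)
  qed
  ultimately obtain b\<^sub>0 where "\<forall>x. f b\<^sub>0 \<le> f x"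
    using continuous_coercive_attains_min[of f "sqrt (2 * S / m)" bL] \<open>S \<ge> 0\<close> m(1) by auto
  then have "f (betaAL X lam n y) = f b\<^sub>0"
    unfolding betaAL_def f_def by (intro arg_min_equality) auto
  with \<open>\<forall>x. f b\<^sub>0 \<le> f x\<close> show ?thesis
    by (simp add: f_def)
qed

lemma betaAL_betaLS_quadratic_le:
  assumes "n \<ge> CARD('p)" "\<And>j. lam n j \<ge> 0"
  shows "(betaAL X lam n y - betaLS X n y) \<bullet> (XtX X n *v (betaAL X lam n y - betaLS X n y))
       \<le> 2 * (\<Sum>j\<in>UNIV. lam n j)"
  using AL_obj_betaLS_le[where lam = lam and y = y and b = "betaAL X lam n y", OF assms]
    AL_obj_betaAL_le[where lam = lam and y = y and b = "betaLS X n y", OF assms]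
  by linarith

lemma rate_b_betaAL_betaLS_le:
  assumes n: "n \<ge> CARD('p)" and lam: "\<And>j. lam n j \<ge> 0"
    and c: "c > 0" "\<And>u. c * real n * (norm u)\<^sup>2 \<le> u \<bullet> (XtX X n *v u)"
  shows "rate_b lam n * norm (betaAL X lam n y - betaLS X n y) \<le> sqrt (2 * real CARD('p) / c)"
proof -
  define d where "d = betaAL X lam n y - betaLS X n y"
  define r where "r = rate_b lam n"
  have "real n > 0"
    using n by (rule real_pos_of_card_le)
  have "c * real n * (norm d)\<^sup>2 \<le> 2 * real CARD('p) * lamstar lam n"
    using c(2)[of d] betaAL_betaLS_quadratic_le[where lam = lam and y = y, OF n lam] sum_lam_le_lamstar[of lam n]
    unfolding d_def by linarith
  then have "r\<^sup>2 * (c * real n * (norm d)\<^sup>2) \<le> r\<^sup>2 * (2 * real CARD('p) * lamstar lam n)"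
    by (rule mult_left_mono) simp
  then have "c * real n * (r * norm d)\<^sup>2 \<le> 2 * real CARD('p) * (r\<^sup>2 * lamstar lam n)"
    by (simp add: power_mult_distrib mult_ac)
  also have "\<dots> \<le> 2 * real CARD('p) * real n"
    using rate_b_sq_mult_lamstar_le[where lam = lam, OF lam] by (simp add: r_def)
  finally have "(r * norm d)\<^sup>2 \<le> 2 * real CARD('p) / c"
    using \<open>real n > 0\<close> c(1) by (simp add: field_simps)
  then show ?thesis
    unfolding r_def d_def by (rule real_le_rsqrt)
qed

lemma rate_b_betaAL_error_le:
  assumes n: "n \<ge> CARD('p)" and lam: "\<And>j. lam n j \<ge> 0"
    and c: "c > 0" "\<And>u. c * real n * (norm u)\<^sup>2 \<le> u \<bullet> (XtX X n *v u)"
  shows "rate_b lam n * norm (betaAL X lam n (resp X n \<beta> \<epsilon>) - \<beta>)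
       \<le> sqrt (2 * real CARD('p) / c) + norm (Xty X n \<epsilon>) / (c * sqrt (real n))"
proof -
  define y where "y = resp X n \<beta> \<epsilon>"
  define s where "s = sqrt (real n)"
  have "real n > 0"
    using n by (rule real_pos_of_card_le)
  then have "s > 0" "s * s = real n"
    by (simp_all add: s_def)
  have "rate_b lam n * norm (betaAL X lam n y - \<beta>)
      \<le> rate_b lam n * norm (betaAL X lam n y - betaLS X n y) + rate_b lam n * norm (betaLS X n y - \<beta>)"
    using norm_triangle_ineq[of "betaAL X lam n y - betaLS X n y" "betaLS X n y - \<beta>"]
      rate_b_nonneg[where lam = lam, OF lam]
    by (simp add: distrib_left[symmetric] mult_left_mono)
  also have "\<dots> \<le> sqrt (2 * real CARD('p) / c) + s * norm (betaLS X n y - \<beta>)"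
    using rate_b_betaAL_betaLS_le[where lam = lam, OF n lam c] rate_b_le_sqrt[of lam n]
    unfolding s_def by (intro add_mono mult_right_mono) auto
  also have "s * norm (betaLS X n y - \<beta>) \<le> norm (Xty X n \<epsilon>) / (c * s)"
  proof -
    have "c * (s * s) * norm (betaLS X n y - \<beta>) \<le> norm (Xty X n \<epsilon>)"
      using betaLS_error_bound[OF n c(2)] by (simp add: \<open>s * s = real n\<close> y_def)
    then show ?thesis
      using c(1) \<open>s > 0\<close> by (simp add: pos_le_divide_eq mult_ac)
  qed
  finally show ?thesis
    by (simp add: y_def s_def)
qed

lemma prob_rate_b_betaAL_error_gt:
  fixes D :: "real measure"
  assumes D: "prob_space D" "sets D = sets borel" "integrable D (\<lambda>x. x\<^sup>2)" "(\<integral>x. x \<partial>D) = 0"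
    and n: "n \<ge> CARD('p)" and lam: "\<And>j. lam n j \<ge> 0"
    and c: "c > 0" "\<And>u. c * real n * (norm u)\<^sup>2 \<le> u \<bullet> (XtX X n *v u)"
    and B: "(\<Sum>i<n. (norm (X n i))\<^sup>2) \<le> B * real n"
    and "t > 0"
  shows "measure (err_space D n)
           {\<epsilon> \<in> space (err_space D n).
              sqrt (2 * real CARD('p) / c) + t < rate_b lam n * norm (betaAL X lam n (resp X n \<beta> \<epsilon>) - \<beta>)}
       \<le> (\<integral>x. x\<^sup>2 \<partial>D) * B / (c * t)\<^sup>2"
proof -
  interpret prob_space "err_space D n"
    using D(1) by (rule prob_space_PiM)
  have "real n > 0"
    using n by (rule real_pos_of_card_le)
  define a where "a = (c * t)\<^sup>2 * real n"
  have "a > 0"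
    unfolding a_def using c(1) \<open>t > 0\<close> \<open>real n > 0\<close> by simp
  have "a \<le> (norm (Xty X n \<epsilon>))\<^sup>2"
    if "sqrt (2 * real CARD('p) / c) + t < rate_b lam n * norm (betaAL X lam n (resp X n \<beta> \<epsilon>) - \<beta>)" for \<epsilon>
  proof -
    have "t < norm (Xty X n \<epsilon>) / (c * sqrt (real n))"
      using that rate_b_betaAL_error_le[where lam = lam, OF n lam c, of \<beta> \<epsilon>] by linarith
    then have "c * t * sqrt (real n) \<le> norm (Xty X n \<epsilon>)"
      using c(1) \<open>real n > 0\<close> by (simp add: pos_less_divide_eq mult_ac)
    then have "(c * t * sqrt (real n))\<^sup>2 \<le> (norm (Xty X n \<epsilon>))\<^sup>2"
      using c(1) \<open>t > 0\<close> by (intro power_mono) auto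
    then show ?thesis
      using \<open>real n > 0\<close> by (simp add: a_def power_mult_distrib)
  qed
  moreover have "(\<lambda>\<epsilon>. (norm (Xty X n \<epsilon>))\<^sup>2) \<in> borel_measurable (err_space D n)"
    using borel_measurable_integrable[OF second_moment_norm_sum_scaleR(1)[OF D, of n "X n"]]
    by (simp add: Xty_eq_sum)
  then have "{\<epsilon> \<in> space (err_space D n). a \<le> (norm (Xty X n \<epsilon>))\<^sup>2} \<in> sets (err_space D n)"
    by measurable
  ultimately have "measure (err_space D n)
           {\<epsilon> \<in> space (err_space D n).
              sqrt (2 * real CARD('p) / c) + t < rate_b lam n * norm (betaAL X lam n (resp X n \<beta> \<epsilon>) - \<beta>)}
       \<le> measure (err_space D n) {\<epsilon> \<in> space (err_space D n). a \<le> (norm (Xty X n \<epsilon>))\<^sup>2}"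
    by (intro finite_measure_mono) blast+
  also have "\<dots> \<le> (\<integral>x. x\<^sup>2 \<partial>D) * (\<Sum>i<n. (norm (X n i))\<^sup>2) / a"
    using D \<open>a > 0\<close> by (rule prob_norm_Xty_ge)
  also have "\<dots> \<le> (\<integral>x. x\<^sup>2 \<partial>D) * (B * real n) / a"
    using B \<open>a > 0\<close> by (intro divide_right_mono mult_left_mono) auto
  also have "\<dots> = (\<integral>x. x\<^sup>2 \<partial>D) * B / (c * t)\<^sup>2"
    using \<open>real n > 0\<close> by (simp add: a_def)
  finally show ?thesis .
qed

end

theorem proposition2:
  fixes X :: "nat \<Rightarrow> nat \<Rightarrow> real^'p::finite"
    and lam :: "nat \<Rightarrow> 'p \<Rightarrow> real"
    and C :: "real^'p^'p"
    and D :: "real measure"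
  assumes D_prob: "prob_space D"
    and D_borel: "sets D = sets borel"
    and D_var: "integrable D (\<lambda>x. x\<^sup>2)"
    and D_mean: "(\<integral>x. x \<partial>D) = 0"
    and D_pos: "(\<integral>x. x\<^sup>2 \<partial>D) > 0"
    and full_rank: "\<And>n b. n \<ge> CARD('p) \<Longrightarrow> (\<forall>i<n. X n i \<bullet> b = 0) \<Longrightarrow> b = 0"
    and lim_C: "(\<lambda>n. (1 / real n) *\<^sub>R XtX X n) \<longlonglongrightarrow> C"
    and C_pd: "\<And>x. x \<noteq> 0 \<Longrightarrow> x \<bullet> (C *v x) > 0"
    and lam_nonneg: "\<And>n j. lam n j \<ge> 0"
    and LS_nonzero: "\<And>n \<beta> j. n \<ge> CARD('p) \<Longrightarrow>
        measure (err_space D n) {\<epsilon> \<in> space (err_space D n). betaLS X n (resp X n \<beta> \<epsilon>) $ j = 0} = 0"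
  shows "\<forall>\<delta>>0. \<exists>M::real. \<forall>n\<ge>CARD('p). \<forall>\<beta>::real^'p.
           measure (err_space D n)
             {\<epsilon> \<in> space (err_space D n).
                rate_b lam n * norm (betaAL X lam n (resp X n \<beta> \<epsilon>) - \<beta>) > M} \<le> \<delta>"
proof (intro allI impI)
  fix \<delta> :: real
  assume "\<delta> > 0"
  interpret full_rank_design X
    using full_rank by unfold_locales
  obtain c where c: "c > 0" "\<And>n u. n \<ge> CARD('p) \<Longrightarrow> c * real n * (norm u)\<^sup>2 \<le> u \<bullet> (XtX X n *v u)"
    using XtX_uniform_lower_bound[OF lim_C C_pd] by blast
  obtain B where B: "B > 0" "\<And>n. (\<Sum>i<n. (norm (X n i))\<^sup>2) \<le> B * real n"
    using design_sum_norm_le[OF lim_C] by blast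
  define \<sigma>2 where "\<sigma>2 = (\<integral>x. x\<^sup>2 \<partial>D)"
  define t where "t = sqrt (\<sigma>2 * B / \<delta>) / c"
  have "t > 0" and bound_eq: "\<sigma>2 * B / (c * t)\<^sup>2 = \<delta>"
    using D_pos B(1) c(1) \<open>\<delta> > 0\<close> by (simp_all add: t_def \<sigma>2_def power_mult_distrib)
  have "measure (err_space D n)
      {\<epsilon> \<in> space (err_space D n).
         sqrt (2 * real CARD('p) / c) + t < rate_b lam n * norm (betaAL X lam n (resp X n \<beta> \<epsilon>) - \<beta>)}
      \<le> \<delta>" if "n \<ge> CARD('p)" for n \<beta>
    using prob_rate_b_betaAL_error_gt[where lam = lam, OF D_prob D_borel D_var D_mean that
        lam_nonneg c(1) c(2)[OF that] B(2) \<open>t > 0\<close>]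
    unfolding bound_eq[unfolded \<sigma>2_def] .
  then show "\<exists>M. \<forall>n\<ge>CARD('p). \<forall>\<beta>. measure (err_space D n)
      {\<epsilon> \<in> space (err_space D n). rate_b lam n * norm (betaAL X lam n (resp X n \<beta> \<epsilon>) - \<beta>) > M} \<le> \<delta>"
    by blast
qed

end
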